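(* Let $V=\{1,\dots,n\}$ and let $Q=(q_{ij})_{i,j=1}^n$ be a symmetric matrix with $0\le q_{ij}\le 1$. Let $G$ be the inhomogeneous random graph on $V$ obtained by joining each pair $\{i,j\}$ independently with probability $q_{ij}$. Let $S\subseteq V$ with $|S|=m$, and let $G(S)$ be the union of the connected components of $G$ that intersect $S$. Let $0<\gamma<1$. (a) If $\sum_{j\in V\setminus S} q_{ij}\le\gamma$ for all nodes $i\in V$, then $\mathbb E[|G(S)|]\le \frac{1}{1-\gamma}\,m$. (b) If $q_{ij}=\gamma/n$ for all $i\neq j$ with $i\in V\setminus S$, then $\mathbb E[|G(S)|]\ge \frac{n+\gamma n}{n+\gamma m}\,m$.
   Context: $|G(S)|$ denotes the number of nodes of $G(S)$. *)

theory Defs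
  imports "HOL-Probability.Probability"
begin

text \<open>Node set V = {1..n}.  Potential edges are unordered pairs, encoded as (i,j) with i<j.\<close>

definition node_pairs :: "nat \<Rightarrow> (nat \<times> nat) set" where
  "node_pairs n = {(i, j). 1 \<le> i \<and> i < j \<and> j \<le> n}"

text \<open>Inhomogeneous random graph: each pair {i,j} (i<j) present independently with
  probability q i j.  A graph is a function from pairs to bool (False outside node_pairs).\<close>

definition random_graph :: "nat \<Rightarrow> (nat \<Rightarrow> nat \<Rightarrow> real) \<Rightarrow> (nat \<times> nat \<Rightarrow> bool) pmf" where
  "random_graph n q = Pi_pmf (node_pairs n) False (\<lambda>(i, j). bernoulli_pmf (q i j))"

definition adj :: "(nat \<times> nat \<Rightarrow> bool) \<Rightarrow> nat \<Rightarrow> nat \<Rightarrow> bool" where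
  "adj G i j \<longleftrightarrow> (i < j \<and> G (i, j)) \<or> (j < i \<and> G (j, i))"

definition comp_of :: "nat \<Rightarrow> (nat \<times> nat \<Rightarrow> bool) \<Rightarrow> nat set \<Rightarrow> nat set" where
  "comp_of n G S = {v \<in> {1..n}. \<exists>s\<in>S. (adj G)\<^sup>*\<^sup>* s v}"

end

theory Submission
  imports Defs
begin

(*
  The expected size of G(S) is the sum over the nodes v of P(v \<in> G(S)), and every node of S
  contributes 1.

  (a) A node v outside S lies in G(S) only if some path s, x_1, ..., x_k = v with s \<in> S
  and distinct x_i \<notin> S is present in G.  A fixed such path is present with probability
  q s x_1 * ... * q x_(k-1) x_k, and the hypothesis bounds the total weight of the paths of
  length k starting at s by \<gamma>^k.  The union bound therefore gives
  E|G(S)| \<le> m (1 + \<gamma> + \<gamma>^2 + ...) = m / (1 - \<gamma>).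

  (b) A node v outside S is certainly in G(S) if it is joined directly to some node of S,
  which fails with probability (1 - p)^m, p = \<gamma>/n.  By Bernoulli's inequality
  (1 - p)^m \<le> 1 / (1 + p m), so P(v \<in> G(S)) \<ge> \<gamma> m / (n + \<gamma> m), and summing over the
  n - m nodes outside S gives the bound.
*)

lemma finite_node_pairs: "finite (node_pairs n)"
  by (rule finite_subset[of _ "{1..n} \<times> {1..n}"]) (auto simp: node_pairs_def)

lemma random_graph_eq_Pi_pmf:
  "random_graph n q = Pi_pmf (node_pairs n) False (\<lambda>k. bernoulli_pmf (case_prod q k))"
  unfolding random_graph_def by (rule arg_cong[where f = "Pi_pmf _ _"]) (auto simp: fun_eq_iff)

lemma set_pmf_random_graph_edges:
  assumes "G \<in> set_pmf (random_graph n q)" "G k"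
  shows "k \<in> node_pairs n"
  using set_Pi_pmf_subset[OF finite_node_pairs, of n False] assms
  unfolding random_graph_def by blast

lemma prob_Pi_pmf_bernoulli_all_eq:
  assumes "finite A" "K \<subseteq> A" "\<forall>k\<in>K. 0 \<le> r k \<and> r k \<le> 1"
  shows "measure_pmf.prob (Pi_pmf A False (\<lambda>k. bernoulli_pmf (r k))) {G. \<forall>k\<in>K. G k = b}
           = (\<Prod>k\<in>K. if b then r k else 1 - r k)"
proof -
  have "{G. \<forall>k\<in>K. G k = b} = Pi A (\<lambda>k. if k \<in> K then {b} else UNIV)"
    using assms(2) by (auto simp: Pi_def)
  then have "measure_pmf.prob (Pi_pmf A False (\<lambda>k. bernoulli_pmf (r k))) {G. \<forall>k\<in>K. G k = b}
      = (\<Prod>k\<in>A. measure_pmf.prob (bernoulli_pmf (r k)) (if k \<in> K then {b} else UNIV))"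
    using assms(1) by (simp add: measure_Pi_pmf_Pi)
  also have "\<dots> = (\<Prod>k\<in>A. if k \<in> K then (if b then r k else 1 - r k) else 1)"
    by (rule prod.cong) (use assms in \<open>auto simp: measure_pmf_single\<close>)
  also have "\<dots> = (\<Prod>k\<in>K. if b then r k else 1 - r k)"
    using assms(1,2) by (simp add: prod.If_cases Int_absorb1)
  finally show ?thesis .
qed

lemma prob_random_graph_all_eq:
  assumes bounds: "\<forall>i\<in>{1..n}. \<forall>j\<in>{1..n}. 0 \<le> q i j \<and> q i j \<le> 1"
    and K: "K \<subseteq> node_pairs n"
  shows "measure_pmf.prob (random_graph n q) {G. \<forall>k\<in>K. G k = b}
           = (\<Prod>k\<in>K. if b then case_prod q k else 1 - case_prod q k)"
proof -
  have "\<forall>k\<in>K. 0 \<le> case_prod q k \<and> case_prod q k \<le> 1"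
    using K bounds by (fastforce simp: node_pairs_def)
  then show ?thesis
    unfolding random_graph_eq_Pi_pmf by (rule prob_Pi_pmf_bernoulli_all_eq[OF finite_node_pairs K])
qed

lemma adj_imp_nodes:
  assumes "\<forall>k. G k \<longrightarrow> k \<in> node_pairs n" "adj G u v"
  shows "u \<in> {1..n}" "v \<in> {1..n}"
  using assms by (fastforce simp: adj_def node_pairs_def)+

lemma comp_of_subset: "comp_of n G S \<subseteq> {1..n}"
  by (auto simp: comp_of_def)

lemma S_subset_comp_of: "S \<subseteq> {1..n} \<Longrightarrow> S \<subseteq> comp_of n G S"
  by (auto simp: comp_of_def)

lemma expectation_card_comp_of:
  assumes "S \<subseteq> {1..n}"
  shows "measure_pmf.expectation (random_graph n q) (\<lambda>G. real (card (comp_of n G S)))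
           = card S + (\<Sum>v\<in>{1..n} - S. measure_pmf.prob (random_graph n q) {G. v \<in> comp_of n G S})"
proof -
  let ?P = "\<lambda>v. measure_pmf.prob (random_graph n q) {G. v \<in> comp_of n G S}"
  have "real (card (comp_of n G S)) = (\<Sum>v\<in>{1..n}. indicator {G. v \<in> comp_of n G S} G)" for G
  proof -
    have "comp_of n G S = {1..n} \<inter> {v. v \<in> comp_of n G S}"
      using comp_of_subset by blast
    then show ?thesis by (simp add: indicator_def sum.If_cases)
  qed
  then have "measure_pmf.expectation (random_graph n q) (\<lambda>G. real (card (comp_of n G S)))
      = (\<Sum>v\<in>{1..n}. ?P v)"
    by (simp add: Bochner_Integration.integral_sum measure_pmf.emeasure_finite less_top[symmetric])
  also have "\<dots> = (\<Sum>v\<in>{1..n} - S. ?P v) + (\<Sum>v\<in>S. ?P v)"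
    by (rule sum.subset_diff[OF assms]) simp
  also have "(\<Sum>v\<in>S. ?P v) = card S"
    using S_subset_comp_of[OF assms] by (simp add: subset_eq)
  finally show ?thesis by simp
qed

fun walk :: "(nat \<times> nat \<Rightarrow> bool) \<Rightarrow> nat \<Rightarrow> nat list \<Rightarrow> bool" where
  "walk G a [] = True"
| "walk G a (x # xs) \<longleftrightarrow> adj G a x \<and> walk G x xs"

fun walk_edges :: "nat \<Rightarrow> nat list \<Rightarrow> (nat \<times> nat) list" where
  "walk_edges a [] = []"
| "walk_edges a (x # xs) = (min a x, max a x) # walk_edges x xs"

fun walk_weight :: "(nat \<Rightarrow> nat \<Rightarrow> real) \<Rightarrow> nat \<Rightarrow> nat list \<Rightarrow> real" where
  "walk_weight q a [] = 1"
| "walk_weight q a (x # xs) = q a x * walk_weight q x xs"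

lemma walk_append: "walk G a (xs @ ys) \<longleftrightarrow> walk G a xs \<and> walk G (last (a # xs)) ys"
  by (induction xs arbitrary: a) auto

lemma set_walk_edges:
  "k \<in> set (walk_edges a xs) \<Longrightarrow> fst k \<in> set (a # xs) \<and> snd k \<in> set (a # xs)"
proof (induction xs arbitrary: a)
  case (Cons x xs)
  then show ?case
    by (cases "k = (min a x, max a x)") (auto simp: min_def max_def)
qed simp

lemma distinct_walk_edges: "distinct (a # xs) \<Longrightarrow> distinct (walk_edges a xs)"
proof (induction xs arbitrary: a)
  case (Cons x xs)
  have "(min a x, max a x) \<notin> set (walk_edges x xs)"
    using set_walk_edges[of "(min a x, max a x)" x xs] Cons.prems by (auto simp: min_def max_def)
  with Cons show ?case by simp
qed simp

lemma walk_iff_walk_edges: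
  "distinct (a # xs) \<Longrightarrow> walk G a xs \<longleftrightarrow> (\<forall>k\<in>set (walk_edges a xs). G k)"
  by (induction xs arbitrary: a) (auto simp: adj_def min_def max_def)

lemma walk_edges_subset_node_pairs:
  "distinct (a # xs) \<Longrightarrow> set (a # xs) \<subseteq> {1..n} \<Longrightarrow> set (walk_edges a xs) \<subseteq> node_pairs n"
  by (induction xs arbitrary: a) (auto simp: node_pairs_def min_def max_def)

lemma prod_list_walk_edges:
  assumes "\<forall>i\<in>{1..n}. \<forall>j\<in>{1..n}. q i j = q j i" "set (a # xs) \<subseteq> {1..n}"
  shows "prod_list (map (case_prod q) (walk_edges a xs)) = walk_weight q a xs"
  using assms by (induction xs arbitrary: a) (auto simp: min_def max_def)

lemma walk_weight_nonneg:
  "\<forall>i\<in>A. \<forall>j\<in>A. 0 \<le> q i j \<Longrightarrow> set (a # xs) \<subseteq> A \<Longrightarrow> 0 \<le> walk_weight q a xs"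
  by (induction xs arbitrary: a) auto

lemma prob_walk:
  assumes sym: "\<forall>i\<in>{1..n}. \<forall>j\<in>{1..n}. q i j = q j i"
    and bounds: "\<forall>i\<in>{1..n}. \<forall>j\<in>{1..n}. 0 \<le> q i j \<and> q i j \<le> 1"
    and walk: "distinct (a # xs)" "set (a # xs) \<subseteq> {1..n}"
  shows "measure_pmf.prob (random_graph n q) {G. walk G a xs} = walk_weight q a xs"
proof -
  have E: "set (walk_edges a xs) \<subseteq> node_pairs n"
    using walk_edges_subset_node_pairs[OF walk] .
  have "{G. walk G a xs} = {G. \<forall>k\<in>set (walk_edges a xs). G k = True}"
    using walk_iff_walk_edges[OF walk(1)] by auto
  then have "measure_pmf.prob (random_graph n q) {G. walk G a xs}
      = (\<Prod>k\<in>set (walk_edges a xs). case_prod q k)"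
    using prob_random_graph_all_eq[OF bounds E, of True] by simp
  also have "\<dots> = prod_list (map (case_prod q) (walk_edges a xs))"
    using distinct_walk_edges[OF walk(1)] by (simp add: prod.distinct_set_conv_list)
  also have "\<dots> = walk_weight q a xs"
    using prod_list_walk_edges[OF sym walk(2)] .
  finally show ?thesis .
qed

(* For s \<notin> T, xs \<in> path_tails T means that s # xs is a simple path from s into T. *)
definition path_tails :: "nat set \<Rightarrow> nat list set" where
  "path_tails T = {xs. xs \<noteq> [] \<and> distinct xs \<and> set xs \<subseteq> T}"

lemma finite_path_tails: "finite T \<Longrightarrow> finite (path_tails T)"
  unfolding path_tails_def
  by (rule finite_subset[OF _ finite_lists_length_le[of T "card T"]])
     (auto simp: card_mono distinct_card[symmetric])

lemma last_path_tails: "xs \<in> path_tails T \<Longrightarrow> last xs \<in> T"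
  unfolding path_tails_def using last_in_set by blast

lemma path_tails_extend:
  assumes xs: "xs \<in> path_tails T" "walk G s xs" and v: "adj G (last xs) v" "v \<in> T"
  shows "\<exists>ys\<in>path_tails T. last ys = v \<and> walk G s ys"
proof (cases "v \<in> set xs")
  case True
  then obtain ys zs where xs_eq: "xs = ys @ v # zs"
    by (meson split_list)
  then have "walk G s (ys @ [v])"
    using \<open>walk G s xs\<close> by (simp add: walk_append)
  with xs xs_eq show ?thesis
    by (intro bexI[of _ "ys @ [v]"]) (auto simp: path_tails_def)
next
  case False
  have "walk G s (xs @ [v])"
    using xs v by (simp add: walk_append path_tails_def)
  with xs v False show ?thesis
    by (intro bexI[of _ "xs @ [v]"]) (auto simp: path_tails_def)
qed

lemma reachable_imp_walk_outside:
  assumes edges: "\<forall>k. G k \<longrightarrow> k \<in> node_pairs n"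
    and reach: "(adj G)\<^sup>*\<^sup>* s v" and "s \<in> S" "v \<notin> S"
  shows "\<exists>s'\<in>S. \<exists>xs\<in>path_tails ({1..n} - S). last xs = v \<and> walk G s' xs"
proof -
  let ?T = "{1..n} - S"
  have "v \<in> S \<or> (\<exists>s'\<in>S. \<exists>xs\<in>path_tails ?T. last xs = v \<and> walk G s' xs)"
    using reach
  proof (induction rule: rtranclp_induct)
    case base
    then show ?case
      using \<open>s \<in> S\<close> by simp
  next
    case (step u v)
    have v: "v \<in> {1..n}"
      using adj_imp_nodes[OF edges step(2)] by simp
    show ?case
    proof (cases "v \<in> S")
      case False
      from step.IH show ?thesis
      proof
        assume "u \<in> S"
        with v False step(2) show ?thesis
          by (intro disjI2 bexI[of _ u] bexI[of _ "[v]"]) (auto simp: path_tails_def)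
      next
        assume "\<exists>s'\<in>S. \<exists>xs\<in>path_tails ?T. last xs = u \<and> walk G s' xs"
        then obtain s' xs where "s' \<in> S" "xs \<in> path_tails ?T" "last xs = u" "walk G s' xs"
          by blast
        with v False step(2) show ?thesis
          using path_tails_extend[of xs ?T G s' v] by blast
      qed
    qed simp
  qed
  then show ?thesis
    using \<open>v \<notin> S\<close> by blast
qed

lemma prob_in_comp_of_le_walk_weights:
  assumes sym: "\<forall>i\<in>{1..n}. \<forall>j\<in>{1..n}. q i j = q j i"
    and bounds: "\<forall>i\<in>{1..n}. \<forall>j\<in>{1..n}. 0 \<le> q i j \<and> q i j \<le> 1"
    and S: "S \<subseteq> {1..n}" and v: "v \<notin> S"
  shows "measure_pmf.prob (random_graph n q) {G. v \<in> comp_of n G S}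
           \<le> (\<Sum>s\<in>S. \<Sum>xs\<in>{xs \<in> path_tails ({1..n} - S). last xs = v}. walk_weight q s xs)"
proof -
  let ?\<mu> = "random_graph n q"
  define I where "I = S \<times> {xs \<in> path_tails ({1..n} - S). last xs = v}"
  have finite_I: "finite I"
    using finite_subset[OF S] finite_path_tails[of "{1..n} - S"] by (simp add: I_def)
  have "{G. v \<in> comp_of n G S} \<inter> set_pmf ?\<mu> \<subseteq> (\<Union>(s, xs)\<in>I. {G. walk G s xs})"
  proof
    fix G
    assume G: "G \<in> {G. v \<in> comp_of n G S} \<inter> set_pmf ?\<mu>"
    then obtain s where "s \<in> S" "(adj G)\<^sup>*\<^sup>* s v"
      by (auto simp: comp_of_def)
    with G v set_pmf_random_graph_edges show "G \<in> (\<Union>(s, xs)\<in>I. {G. walk G s xs})"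
      using reachable_imp_walk_outside[of G n s v S] by (fastforce simp: I_def)
  qed
  then have "measure_pmf.prob ?\<mu> {G. v \<in> comp_of n G S}
      \<le> measure_pmf.prob ?\<mu> (\<Union>(s, xs)\<in>I. {G. walk G s xs})"
    by (subst measure_Int_set_pmf[symmetric]) (rule measure_pmf.finite_measure_mono, auto)
  also have "\<dots> \<le> (\<Sum>(s, xs)\<in>I. measure_pmf.prob ?\<mu> {G. walk G s xs})"
    using measure_pmf.finite_measure_subadditive_finite[OF finite_I, of "\<lambda>(s, xs). {G. walk G s xs}"]
    by (simp add: split_def)
  also have "\<dots> = (\<Sum>(s, xs)\<in>I. walk_weight q s xs)"
  proof (rule sum.cong[OF refl], clarify)
    fix s xs
    assume "(s, xs) \<in> I"
    then have "distinct (s # xs)" "set (s # xs) \<subseteq> {1..n}"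
      using S by (auto simp: I_def path_tails_def)
    then show "measure_pmf.prob ?\<mu> {G. walk G s xs} = walk_weight q s xs"
      using prob_walk[OF sym bounds] by blast
  qed
  finally show ?thesis
    by (simp add: I_def sum.cartesian_product)
qed

lemma sum_walk_weight_length_le:
  assumes "finite T" "T \<subseteq> A" "a \<in> A"
    and nonneg: "\<forall>i\<in>A. \<forall>j\<in>T. 0 \<le> q i j"
    and row_sum: "\<forall>i\<in>A. (\<Sum>j\<in>T. q i j) \<le> \<gamma>" and "0 \<le> \<gamma>"
  shows "(\<Sum>xs\<in>{xs. set xs \<subseteq> T \<and> length xs = k}. walk_weight q a xs) \<le> \<gamma> ^ k"
  using \<open>a \<in> A\<close>
proof (induction k arbitrary: a)
  case 0
  have "{xs. set xs \<subseteq> T \<and> length xs = 0} = {[]}"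
    by auto
  then show ?case
    by simp
next
  case (Suc k)
  let ?L = "{xs. set xs \<subseteq> T \<and> length xs = k}"
  have "(\<Sum>xs\<in>{xs. set xs \<subseteq> T \<and> length xs = Suc k}. walk_weight q a xs)
      = (\<Sum>(xs, x)\<in>?L \<times> T. walk_weight q a (x # xs))"
    unfolding lists_length_Suc_eq by (subst sum.reindex) (auto simp: inj_on_def split_def)
  also have "\<dots> = (\<Sum>x\<in>T. q a x * (\<Sum>xs\<in>?L. walk_weight q x xs))"
    by (simp add: sum.cartesian_product[symmetric] sum.swap[of _ ?L] sum_distrib_left)
  also have "\<dots> \<le> (\<Sum>x\<in>T. q a x * \<gamma> ^ k)"
    using Suc nonneg \<open>T \<subseteq> A\<close> by (intro sum_mono mult_left_mono) auto
  also have "\<dots> = (\<Sum>x\<in>T. q a x) * \<gamma> ^ k"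
    by (simp add: sum_distrib_right)
  also have "\<dots> \<le> \<gamma> * \<gamma> ^ k"
    using row_sum Suc.prems \<open>0 \<le> \<gamma>\<close> by (intro mult_right_mono) auto
  finally show ?case
    by simp
qed

lemma sum_power_le_geometric:
  fixes x :: real
  assumes "0 \<le> x" "x < 1"
  shows "(\<Sum>k=1..N. x ^ k) \<le> x / (1 - x)"
  using assms by (auto simp: sum_gp intro!: divide_right_mono)

lemma sum_path_tails_walk_weight_le:
  assumes "finite T" "T \<subseteq> A" "a \<in> A"
    and nonneg: "\<forall>i\<in>A. \<forall>j\<in>A. 0 \<le> q i j"
    and row_sum: "\<forall>i\<in>A. (\<Sum>j\<in>T. q i j) \<le> \<gamma>" and "0 \<le> \<gamma>" "\<gamma> < 1"
  shows "(\<Sum>xs\<in>path_tails T. walk_weight q a xs) \<le> \<gamma> / (1 - \<gamma>)"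
proof -
  define L where "L = {xs. set xs \<subseteq> T \<and> length xs \<in> {1..card T}}"
  have finite_L: "finite L"
    unfolding L_def by (rule finite_subset[OF _ finite_lists_length_le[OF \<open>finite T\<close>]]) auto
  have "path_tails T \<subseteq> L"
    using \<open>finite T\<close> by (auto simp: path_tails_def L_def card_mono distinct_card[symmetric] Suc_le_eq)
  then have "(\<Sum>xs\<in>path_tails T. walk_weight q a xs) \<le> (\<Sum>xs\<in>L. walk_weight q a xs)"
    using finite_L assms(2,3) nonneg
    by (intro sum_mono2) (auto simp: L_def intro!: walk_weight_nonneg[of A])
  also have "\<dots> = (\<Sum>k=1..card T. \<Sum>xs\<in>{xs \<in> L. length xs = k}. walk_weight q a xs)"
    by (rule sum.group[symmetric]) (use finite_L in \<open>auto simp: L_def\<close>)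
  also have "\<dots> \<le> (\<Sum>k=1..card T. \<gamma> ^ k)"
  proof (rule sum_mono)
    fix k
    assume "k \<in> {1..card T}"
    then have "{xs \<in> L. length xs = k} = {xs. set xs \<subseteq> T \<and> length xs = k}"
      by (auto simp: L_def)
    then show "(\<Sum>xs\<in>{xs \<in> L. length xs = k}. walk_weight q a xs) \<le> \<gamma> ^ k"
      using assms nonneg sum_walk_weight_length_le[of T A a q \<gamma> k] by (simp add: subset_eq)
  qed
  also have "\<dots> \<le> \<gamma> / (1 - \<gamma>)"
    using sum_power_le_geometric assms by blast
  finally show ?thesis .
qed

lemma expectation_card_comp_of_le:
  assumes sym: "\<forall>i\<in>{1..n}. \<forall>j\<in>{1..n}. q i j = q j i"
    and bounds: "\<forall>i\<in>{1..n}. \<forall>j\<in>{1..n}. 0 \<le> q i j \<and> q i j \<le> 1"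
    and S: "S \<subseteq> {1..n}" and "0 \<le> \<gamma>" "\<gamma> < 1"
    and row_sum: "\<forall>i\<in>{1..n}. (\<Sum>j\<in>{1..n} - S. q i j) \<le> \<gamma>"
  shows "measure_pmf.expectation (random_graph n q) (\<lambda>G. real (card (comp_of n G S)))
           \<le> card S / (1 - \<gamma>)"
proof -
  let ?T = "{1..n} - S"
  let ?w = "\<lambda>s v. \<Sum>xs\<in>{xs \<in> path_tails ?T. last xs = v}. walk_weight q s xs"
  have "measure_pmf.expectation (random_graph n q) (\<lambda>G. real (card (comp_of n G S)))
      = card S + (\<Sum>v\<in>?T. measure_pmf.prob (random_graph n q) {G. v \<in> comp_of n G S})"
    using expectation_card_comp_of[OF S] .
  also have "\<dots> \<le> card S + (\<Sum>v\<in>?T. \<Sum>s\<in>S. ?w s v)"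
    using prob_in_comp_of_le_walk_weights[OF sym bounds S] by (intro add_left_mono sum_mono) auto
  also have "(\<Sum>v\<in>?T. \<Sum>s\<in>S. ?w s v) = (\<Sum>s\<in>S. \<Sum>v\<in>?T. ?w s v)"
    by (rule sum.swap)
  also have "\<dots> = (\<Sum>s\<in>S. \<Sum>xs\<in>path_tails ?T. walk_weight q s xs)"
    using last_path_tails by (intro sum.cong[OF refl] sum.group finite_path_tails) auto
  also have "\<dots> \<le> (\<Sum>s\<in>S. \<gamma> / (1 - \<gamma>))"
    using S bounds row_sum assms(4,5)
    by (intro sum_mono sum_path_tails_walk_weight_le[of ?T "{1..n}"]) auto
  also have "card S + (\<Sum>s\<in>S. \<gamma> / (1 - \<gamma>)) = card S / (1 - \<gamma>)"
    using \<open>\<gamma> < 1\<close> by (simp add: field_simps)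
  finally show ?thesis
    by simp
qed

lemma prob_not_in_comp_of_le:
  assumes sym: "\<forall>i\<in>{1..n}. \<forall>j\<in>{1..n}. q i j = q j i"
    and bounds: "\<forall>i\<in>{1..n}. \<forall>j\<in>{1..n}. 0 \<le> q i j \<and> q i j \<le> 1"
    and S: "S \<subseteq> {1..n}" and v: "v \<in> {1..n} - S"
  shows "measure_pmf.prob (random_graph n q) {G. v \<notin> comp_of n G S} \<le> (\<Prod>s\<in>S. 1 - q s v)"
proof -
  define e where "e s = (min s v, max s v)" for s
  have e_pairs: "e ` S \<subseteq> node_pairs n"
    using S v by (auto simp: e_def node_pairs_def min_def max_def dest: le_neq_implies_less)
  have "v \<in> comp_of n G S" if "s \<in> S" "G (e s)" for G s
  proof -
    have "s \<noteq> v"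
      using v \<open>s \<in> S\<close> by auto
    then have "adj G s v"
      using \<open>G (e s)\<close> by (auto simp: e_def adj_def min_def max_def split: if_splits)
    with \<open>s \<in> S\<close> v show ?thesis
      by (auto simp: comp_of_def)
  qed
  then have "{G. v \<notin> comp_of n G S} \<subseteq> {G. \<forall>k\<in>e ` S. G k = False}"
    by blast
  then have "measure_pmf.prob (random_graph n q) {G. v \<notin> comp_of n G S}
      \<le> measure_pmf.prob (random_graph n q) {G. \<forall>k\<in>e ` S. G k = False}"
    by (rule measure_pmf.finite_measure_mono) simp
  also have "\<dots> = (\<Prod>k\<in>e ` S. 1 - case_prod q k)"
    using prob_random_graph_all_eq[OF bounds e_pairs, of False] by simp
  also have "\<dots> = (\<Prod>s\<in>S. 1 - q s v)"
  proof -
    have "inj_on e S"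
      using v by (auto simp: inj_on_def e_def min_def max_def split: if_splits)
    then show ?thesis
      unfolding prod.reindex[OF \<open>inj_on e S\<close>]
      using S v sym by (intro prod.cong) (auto simp: e_def min_def max_def)
  qed
  finally show ?thesis .
qed

lemma one_minus_power_ge:
  fixes p :: real
  assumes "0 \<le> p" "p \<le> 1"
  shows "p * m / (1 + p * m) \<le> 1 - (1 - p) ^ m"
proof -
  have "(1 - p) ^ m * (1 + p * m) \<le> (1 - p) ^ m * (1 + p) ^ m"
    using assms Bernoulli_inequality[of p m] by (intro mult_left_mono) (auto simp: mult.commute)
  also have "\<dots> = (1 - p * p) ^ m"
    by (simp add: power_mult_distrib[symmetric] algebra_simps)
  also have "\<dots> \<le> 1"
    using assms by (intro power_le_one) (auto simp: mult_le_one)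
  finally have "(1 - p) ^ m * (1 + p * m) \<le> 1" .
  moreover have "0 < 1 + p * m"
    using assms by (simp add: add_pos_nonneg)
  ultimately show ?thesis
    by (simp add: field_simps)
qed

lemma expectation_card_comp_of_ge:
  fixes q :: "nat \<Rightarrow> nat \<Rightarrow> real" and \<gamma> :: real
  assumes sym: "\<forall>i\<in>{1..n}. \<forall>j\<in>{1..n}. q i j = q j i"
    and bounds: "\<forall>i\<in>{1..n}. \<forall>j\<in>{1..n}. 0 \<le> q i j \<and> q i j \<le> 1"
    and S: "S \<subseteq> {1..n}" and "0 \<le> \<gamma>" "\<gamma> \<le> 1"
    and uniform: "\<forall>i\<in>{1..n} - S. \<forall>j\<in>{1..n}. i \<noteq> j \<longrightarrow> q i j = \<gamma> / n"
  shows "(n + \<gamma> * n) / (n + \<gamma> * card S) * card S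
           \<le> measure_pmf.expectation (random_graph n q) (\<lambda>G. real (card (comp_of n G S)))"
proof -
  let ?T = "{1..n} - S" and ?m = "real (card S)"
  let ?P = "\<lambda>v. measure_pmf.prob (random_graph n q) {G. v \<in> comp_of n G S}"
  have card_T: "card ?T = n - card S" and m_le_n: "card S \<le> n"
    using S card_mono[OF _ S] by (simp_all add: card_Diff_subset finite_subset)
  have P_ge: "\<gamma> * ?m / (n + \<gamma> * ?m) \<le> ?P v" if v: "v \<in> ?T" for v
  proof -
    define p where "p = \<gamma> / n"
    have "0 < n"
      using v by auto
    then have p: "0 \<le> p" "p \<le> 1"
      using assms(4,5) by (auto simp: p_def field_simps)
    have "q s v = p" if "s \<in> S" for s
      using that S v sym uniform by (metis DiffE subsetD p_def)
    then have "(\<Prod>s\<in>S. 1 - q s v) = (1 - p) ^ card S"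
      by simp
    then have "1 - (1 - p) ^ card S \<le> ?P v"
      using prob_not_in_comp_of_le[OF sym bounds S v]
        measure_pmf.prob_compl[of "{G. v \<in> comp_of n G S}" "random_graph n q"]
      by (simp add: Compl_eq_Diff_UNIV[symmetric] Collect_neg_eq[symmetric])
    moreover have "p * ?m / (1 + p * ?m) = \<gamma> * ?m / (n + \<gamma> * ?m)"
      using \<open>0 < n\<close> by (simp add: p_def field_simps)
    ultimately show ?thesis
      using one_minus_power_ge[OF p, of "card S"] by simp
  qed
  have "(n + \<gamma> * n) / (n + \<gamma> * ?m) * ?m = ?m + (n - ?m) * (\<gamma> * ?m / (n + \<gamma> * ?m))"
  proof (cases "n + \<gamma> * ?m = 0")
    case True
    moreover have "0 \<le> \<gamma> * ?m"
      using \<open>0 \<le> \<gamma>\<close> by simp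
    ultimately have "n = 0"
      by linarith
    then show ?thesis
      using m_le_n by simp
  next
    case False
    then show ?thesis
      by (simp add: field_simps)
  qed
  also have "\<dots> \<le> ?m + (\<Sum>v\<in>?T. ?P v)"
  proof -
    have "(\<Sum>v\<in>?T. \<gamma> * ?m / (n + \<gamma> * ?m)) \<le> (\<Sum>v\<in>?T. ?P v)"
      using P_ge by (rule sum_mono)
    then show ?thesis
      using card_T m_le_n by (simp add: of_nat_diff)
  qed
  also have "\<dots> = measure_pmf.expectation (random_graph n q) (\<lambda>G. real (card (comp_of n G S)))"
    using expectation_card_comp_of[OF S] by simp
  finally show ?thesis .
qed

theorem lemma1:
  fixes n m :: nat and q :: "nat \<Rightarrow> nat \<Rightarrow> real" and S :: "nat set" and \<gamma> :: real
  assumes sym: "\<forall>i\<in>{1..n}. \<forall>j\<in>{1..n}. q i j = q j i"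
    and bounds: "\<forall>i\<in>{1..n}. \<forall>j\<in>{1..n}. 0 \<le> q i j \<and> q i j \<le> 1"
    and S: "S \<subseteq> {1..n}" and m: "card S = m"
    and \<gamma>: "0 < \<gamma>" "\<gamma> < 1"
  shows "((\<forall>i\<in>{1..n}. (\<Sum>j\<in>{1..n} - S. q i j) \<le> \<gamma>) \<longrightarrow>
           measure_pmf.expectation (random_graph n q) (\<lambda>G. real (card (comp_of n G S)))
             \<le> 1 / (1 - \<gamma>) * real m)
       \<and> ((\<forall>i\<in>{1..n} - S. \<forall>j\<in>{1..n}. i \<noteq> j \<longrightarrow> q i j = \<gamma> / real n) \<longrightarrow>
           measure_pmf.expectation (random_graph n q) (\<lambda>G. real (card (comp_of n G S)))
             \<ge> (real n + \<gamma> * real n) / (real n + \<gamma> * real m) * real m)"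
proof (intro conjI impI)
  assume "\<forall>i\<in>{1..n}. (\<Sum>j\<in>{1..n} - S. q i j) \<le> \<gamma>"
  then show "measure_pmf.expectation (random_graph n q) (\<lambda>G. real (card (comp_of n G S)))
      \<le> 1 / (1 - \<gamma>) * real m"
    using expectation_card_comp_of_le[OF sym bounds S] \<gamma> m by simp
next
  assume "\<forall>i\<in>{1..n} - S. \<forall>j\<in>{1..n}. i \<noteq> j \<longrightarrow> q i j = \<gamma> / real n"
  then show "(real n + \<gamma> * real n) / (real n + \<gamma> * real m) * real m
      \<le> measure_pmf.expectation (random_graph n q) (\<lambda>G. real (card (comp_of n G S)))"
    using expectation_card_comp_of_ge[OF sym bounds S] \<gamma> m by simp
qed

end
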